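(* Let $G$ be a connected plane (multi)graph with at least two vertices such that every internal vertex and every internal face has degree at least $4$. Let $b$ be the number of external vertices. Then the average degree of the external vertices of $G$ is at most $3-\frac{4}{b}$. In particular, $G$ has an external vertex of degree less than $3$.
   Context: A plane graph is a finite planar graph with a fixed embedding in the plane. The external face is the unbounded face; other faces are internal. A vertex is external if it lies on the boundary of the external face, and internal otherwise. The degree of a face is its degree as a vertex of the dual graph, i.e. the number of edges on its boundary counted with multiplicity. *)

theory Defs
  imports Complex_Main "HOL-Combinatorics.Orbits" "HOL-Combinatorics.Permutations"
begin

text \<open>Connected plane multigraphs are represented combinatorially by combinatorial maps
(rotation systems): a finite set D of darts (half-edges), a fixed-point-free involution
alpha on D pairing the two darts of each edge, and a permutation sigma on D giving the
cyclic order of darts around each vertex. Loops and parallel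
edges are allowed. The map is connected if the group generated by alpha and sigma acts
transitively on D, and it is plane (genus 0) iff V - E + F = 2.\<close>

definition map_verts :: "'a set \<Rightarrow> ('a \<Rightarrow> 'a) \<Rightarrow> 'a set set" where
  "map_verts D \<sigma> = {orbit \<sigma> d | d. d \<in> D}"

definition map_edges :: "'a set \<Rightarrow> ('a \<Rightarrow> 'a) \<Rightarrow> 'a set set" where
  "map_edges D \<alpha> = {orbit \<alpha> d | d. d \<in> D}"

definition map_faces :: "'a set \<Rightarrow> ('a \<Rightarrow> 'a) \<Rightarrow> ('a \<Rightarrow> 'a) \<Rightarrow> 'a set set" where
  "map_faces D \<alpha> \<sigma> = {orbit (\<sigma> \<circ> \<alpha>) d | d. d \<in> D}"

definition comb_map :: "'a set \<Rightarrow> ('a \<Rightarrow> 'a) \<Rightarrow> ('a \<Rightarrow> 'a) \<Rightarrow> bool" where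
  "comb_map D \<alpha> \<sigma> \<longleftrightarrow> finite D \<and> \<alpha> permutes D \<and> \<sigma> permutes D \<and>
     (\<forall>d\<in>D. \<alpha> d \<noteq> d \<and> \<alpha> (\<alpha> d) = d)"

definition map_connected :: "'a set \<Rightarrow> ('a \<Rightarrow> 'a) \<Rightarrow> ('a \<Rightarrow> 'a) \<Rightarrow> bool" where
  "map_connected D \<alpha> \<sigma> \<longleftrightarrow>
     (\<forall>d\<in>D. \<forall>e\<in>D. (d, e) \<in> ({(x, \<alpha> x) | x. x \<in> D} \<union> {(x, \<sigma> x) | x. x \<in> D})\<^sup>*)"

definition plane_map :: "'a set \<Rightarrow> ('a \<Rightarrow> 'a) \<Rightarrow> ('a \<Rightarrow> 'a) \<Rightarrow> bool" where
  "plane_map D \<alpha> \<sigma> \<longleftrightarrow> comb_map D \<alpha> \<sigma> \<and> map_connected D \<alpha> \<sigma> \<and>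
     int (card (map_verts D \<sigma>)) - int (card (map_edges D \<alpha>)) + int (card (map_faces D \<alpha> \<sigma>)) = 2"

text \<open>Degree of a vertex = number of darts at it (loops count twice); degree of a face =
length of its boundary walk = number of darts in its orbit. Given the external face f0,
a vertex is external iff one of its darts lies on the boundary walk of f0.\<close>

definition ext_verts :: "'a set \<Rightarrow> ('a \<Rightarrow> 'a) \<Rightarrow> 'a set \<Rightarrow> 'a set set" where
  "ext_verts D \<sigma> f0 = {v \<in> map_verts D \<sigma>. v \<inter> f0 \<noteq> {}}"

end

theory Submission
  imports Defs
begin

text \<open>Double counting of darts: vertex degrees, face degrees and twice the number of edges
all sum to the number n of darts. Internal vertices and internal faces contribute at least 4
each, and the outer face has at least b darts since every external vertex owns one of them.
Hence 4 (V - b) + S \<le> n and 4 (F - 1) + b \<le> n, where S is the degree sum of the external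
vertices. Adding these and using Euler's formula V + F = n / 2 + 2 gives S \<le> 3 b - 4.\<close>

lemma orbits_eq_if_common_mem:
  assumes "permutation p" "x \<in> orbit p a" "x \<in> orbit p b"
  shows "orbit p a = orbit p b"
  using assms by (metis cyclic_on_orbit' orbit_cyclic_eq3)

lemma sum_card_orbits:
  assumes "finite S" "p permutes S"
  shows "(\<Sum>X\<in>{orbit p x | x. x \<in> S}. card X) = card S"
proof -
  let ?O = "{orbit p x | x. x \<in> S}"
  have perm: "permutation p"
    using assms by (rule permutes_imp_permutation)
  have "\<Union> ?O = S"
    using permutes_orbit_subset[OF assms(2)] permutation_self_in_orbit[OF perm] by blast
  moreover have "pairwise disjnt ?O"
    unfolding pairwise_def disjnt_def using orbits_eq_if_common_mem[OF perm] by blast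
  moreover have "\<forall>X\<in>?O. finite X"
    using permutes_orbit_subset[OF assms(2)] assms(1) finite_subset by blast
  ultimately show ?thesis
    using card_Union_disjoint[of ?O] by simp
qed

lemma orbit_involution:
  assumes "f (f x) = x"
  shows "orbit f x = {x, f x}"
proof
  show "orbit f x \<subseteq> {x, f x}"
  proof
    fix y assume "y \<in> orbit f x"
    then show "y \<in> {x, f x}" by induct (use assms in auto)
  qed
  show "{x, f x} \<subseteq> orbit f x"
    using orbit.base[of f x] orbit.step[of "f x" f x] assms by auto
qed

lemma sum_ge_card_diff_bound:
  fixes f :: "'a \<Rightarrow> nat"
  assumes "finite A" "B \<subseteq> A" "\<forall>x\<in>A - B. k \<le> f x"
  shows "k * card (A - B) + sum f B \<le> sum f A"
proof -
  have "k * card (A - B) \<le> sum f (A - B)"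
    using sum_mono[of "A - B" "\<lambda>_. k" f] assms(3) by (simp add: mult.commute)
  then show ?thesis
    using sum.subset_diff[OF assms(2,1), of f] by simp
qed

lemma comb_map_sum_card_verts:
  "comb_map D \<alpha> \<sigma> \<Longrightarrow> (\<Sum>v\<in>map_verts D \<sigma>. card v) = card D"
  unfolding comb_map_def map_verts_def by (simp add: sum_card_orbits)

lemma comb_map_sum_card_faces:
  "comb_map D \<alpha> \<sigma> \<Longrightarrow> (\<Sum>f\<in>map_faces D \<alpha> \<sigma>. card f) = card D"
  unfolding comb_map_def map_faces_def by (simp add: sum_card_orbits permutes_compose)

lemma comb_map_card_edges:
  assumes "comb_map D \<alpha> \<sigma>"
  shows "2 * card (map_edges D \<alpha>) = card D"
proof -
  have "card e = 2" if "e \<in> map_edges D \<alpha>" for e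
    using that assms orbit_involution[of \<alpha>]
    unfolding map_edges_def comb_map_def by auto
  then have "(\<Sum>e\<in>map_edges D \<alpha>. card e) = 2 * card (map_edges D \<alpha>)"
    by simp
  moreover have "(\<Sum>e\<in>map_edges D \<alpha>. card e) = card D"
    using assms unfolding comb_map_def map_edges_def by (simp add: sum_card_orbits)
  ultimately show ?thesis by simp
qed

lemma comb_map_face_subset:
  assumes "comb_map D \<alpha> \<sigma>" "f \<in> map_faces D \<alpha> \<sigma>"
  shows "f \<subseteq> D"
proof -
  obtain d where d: "d \<in> D" "f = orbit (\<sigma> \<circ> \<alpha>) d"
    using assms(2) unfolding map_faces_def by blast
  have "\<sigma> \<circ> \<alpha> permutes D"
    using assms(1) permutes_compose unfolding comb_map_def by blast
  from permutes_orbit_subset[OF this d(1)] d(2) show ?thesis by simp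
qed

lemma ext_verts_eq_image:
  assumes "finite D" "\<sigma> permutes D" "f0 \<subseteq> D"
  shows "ext_verts D \<sigma> f0 = orbit \<sigma> ` f0"
proof -
  have perm: "permutation \<sigma>"
    using assms(1,2) by (rule permutes_imp_permutation)
  have "v \<in> orbit \<sigma> ` f0" if v: "v \<in> ext_verts D \<sigma> f0" for v
  proof -
    obtain d x where "v = orbit \<sigma> d" "x \<in> v" "x \<in> f0"
      using v unfolding ext_verts_def map_verts_def by blast
    then have "v = orbit \<sigma> x"
      using orbits_eq_if_common_mem[OF perm] permutation_self_in_orbit[OF perm] by metis
    with \<open>x \<in> f0\<close> show ?thesis by blast
  qed
  moreover have "orbit \<sigma> x \<in> ext_verts D \<sigma> f0" if "x \<in> f0" for x
    using that assms(3) permutation_self_in_orbit[OF perm, of x]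
    unfolding ext_verts_def map_verts_def by blast
  ultimately show ?thesis by blast
qed

lemma comb_map_ext_verts:
  assumes "comb_map D \<alpha> \<sigma>" "f0 \<in> map_faces D \<alpha> \<sigma>"
  shows "card (ext_verts D \<sigma> f0) \<le> card f0" and "card (ext_verts D \<sigma> f0) > 0"
proof -
  have D: "finite D" "\<sigma> permutes D"
    using assms(1) unfolding comb_map_def by auto
  have f0: "f0 \<subseteq> D"
    using comb_map_face_subset[OF assms] .
  then have "finite f0"
    using D(1) finite_subset by blast
  moreover have "f0 \<noteq> {}"
    using assms(2) orbit_nonempty[of "\<sigma> \<circ> \<alpha>"] by (auto simp: map_faces_def)
  ultimately show "card (ext_verts D \<sigma> f0) \<le> card f0" "card (ext_verts D \<sigma> f0) > 0"
    unfolding ext_verts_eq_image[OF D f0] by (simp_all add: card_image_le card_gt_0_iff)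
qed

lemma plane_map_ext_degree_sum_le:
  assumes "plane_map D \<alpha> \<sigma>"
    and "f0 \<in> map_faces D \<alpha> \<sigma>"
    and "\<forall>v\<in>map_verts D \<sigma>. v \<notin> ext_verts D \<sigma> f0 \<longrightarrow> card v \<ge> 4"
    and "\<forall>f\<in>map_faces D \<alpha> \<sigma>. f \<noteq> f0 \<longrightarrow> card f \<ge> 4"
  shows "(\<Sum>v\<in>ext_verts D \<sigma> f0. card v) + 4 \<le> 3 * card (ext_verts D \<sigma> f0)"
proof -
  let ?V = "map_verts D \<sigma>" and ?E = "map_edges D \<alpha>" and ?F = "map_faces D \<alpha> \<sigma>"
    and ?B = "ext_verts D \<sigma> f0"
  have cm: "comb_map D \<alpha> \<sigma>"
    and euler: "int (card ?V) - int (card ?E) + int (card ?F) = 2"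
    using assms(1) unfolding plane_map_def by auto
  have fin: "finite ?V" "finite ?F"
    using cm unfolding comb_map_def map_verts_def map_faces_def by auto
  have BV: "?B \<subseteq> ?V"
    unfolding ext_verts_def by blast
  have verts: "4 * card (?V - ?B) + (\<Sum>v\<in>?B. card v) \<le> card D"
    using sum_ge_card_diff_bound[OF fin(1) BV, of 4 card] assms(3)
    by (simp add: comb_map_sum_card_verts[OF cm])
  have faces: "4 * card (?F - {f0}) + card f0 \<le> card D"
    using sum_ge_card_diff_bound[of ?F "{f0}" 4 card] fin(2) assms(2,4)
    by (simp add: comb_map_sum_card_faces[OF cm])
  have "card ?F \<ge> 1"
    using fin(2) assms(2) by (metis One_nat_def Suc_leI card_gt_0_iff empty_iff)
  then show ?thesis
    using verts faces euler comb_map_card_edges[OF cm] comb_map_ext_verts(1)[OF cm assms(2)]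
      card_Diff_subset[OF finite_subset[OF BV fin(1)] BV] card_mono[OF fin(1) BV]
      card_Diff_singleton[OF assms(2)]
    by linarith
qed

theorem lemma6p4:
  fixes D :: "'a set" and \<alpha> \<sigma> :: "'a \<Rightarrow> 'a" and f0 :: "'a set"
  assumes "plane_map D \<alpha> \<sigma>"
    and "f0 \<in> map_faces D \<alpha> \<sigma>"
    and "card (map_verts D \<sigma>) \<ge> 2"
    and "\<forall>v\<in>map_verts D \<sigma>. v \<notin> ext_verts D \<sigma> f0 \<longrightarrow> card v \<ge> 4"
    and "\<forall>f\<in>map_faces D \<alpha> \<sigma>. f \<noteq> f0 \<longrightarrow> card f \<ge> 4"
  shows "((\<Sum>v\<in>ext_verts D \<sigma> f0. real (card v)) / real (card (ext_verts D \<sigma> f0))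
           \<le> 3 - 4 / real (card (ext_verts D \<sigma> f0)))
           \<and> (\<exists>v\<in>ext_verts D \<sigma> f0. card v < 3)"
proof -
  let ?B = "ext_verts D \<sigma> f0"
  have key: "(\<Sum>v\<in>?B. card v) + 4 \<le> 3 * card ?B"
    using plane_map_ext_degree_sum_le[OF assms(1,2,4,5)] .
  have b_pos: "card ?B > 0"
    using assms(1,2) comb_map_ext_verts(2) unfolding plane_map_def by blast
  have "(\<Sum>v\<in>?B. real (card v)) \<le> 3 * real (card ?B) - 4"
    using key by (simp flip: of_nat_sum)
  then have average: "(\<Sum>v\<in>?B. real (card v)) / real (card ?B) \<le> 3 - 4 / real (card ?B)"
    using b_pos by (simp add: field_simps)
  have "\<exists>v\<in>?B. card v < 3"
  proof (rule ccontr)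
    assume "\<not> (\<exists>v\<in>?B. card v < 3)"
    then have "3 * card ?B \<le> (\<Sum>v\<in>?B. card v)"
      using sum_mono[of ?B "\<lambda>_. 3" card] by (simp add: not_less mult.commute)
    then show False using key by linarith
  qed
  with average show ?thesis by blast
qed

end
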